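(* For every $\psi\in\mathsf{N4CK}$, we have $\overline{Tr}(\psi)\in\mathsf{FSK}^d$.
   Context: $\mathcal{L}_\Box$ is built from propositional variables with $\wedge,\vee,\to$, strong negation $\sim$, and a unary modality $\Box$; $\mathcal{L}_{\Box\!\!\rightarrow}$ is built likewise but with a binary would-conditional $\Box\!\!\rightarrow$ instead of $\Box$. $\mathsf{FSK}^d$ is the modal logic over $\mathcal{L}_\Box$ given by Nelsonian modal models $(W,\leq,R,V^+,V^-)$: $\leq$ a preorder, $V^\pm$ assigning upward-closed sets, $R\subseteq W\times W$ with (i) $w\leq w'$ and $R(w,v)$ imply $R(w',v')$ for some $v'\geq v$, (ii) $R(w,v)$ and $v\leq v'$ imply $R(w',v')$ for some $w'\geq w$; verification/falsification as in Nelson's logic $\mathsf{N4}$ (atoms by $V^\pm$; $\wedge$ verified iff both verified, falsified iff one falsified; $\vee$ dually; $\sim$ swaps; $w\models^+\psi\to\chi$ iff for all $v\geq w$, $v\models^+\psi$ implies $v\models^+\chi$; $w\models^-\psi\to\chi$ iff $w\models^+\psi$ and $w\models^-\chi$), plus $w\models^+\Box\psi$ iff for all $v\geq w$ and $u$ with $R(v,u)$, $u\models^+\psi$, and $w\models^-\Box\psi$ iff some $u$ has $R(w,u)$ and $u\models^-\psi$; validity means verification everywhere. $\mathsf{N4CK}$ is the analogous conditional logic over $\mathcal{L}_{\Box\!\!\rightarrow}$: models $(W,\leq,R,V^+,V^-)$ with $R\subseteq W\times(\mathcal{P}(W)\times\mathcal{P}(W))\times W$ satisfying (i),(ii) for each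 $R_{(X,Y)}$; $w\models^+\psi\Box\!\!\rightarrow\chi$ iff for all $v\geq w$ and $u$ with $R_{\|\psi\|}(v,u)$, $u\models^+\chi$; $w\models^-\psi\Box\!\!\rightarrow\chi$ iff some $u$ has $R_{\|\psi\|}(w,u)$ and $u\models^-\chi$, where $\|\psi\|=(\{w\mid w\models^+\psi\},\{w\mid w\models^-\psi\})$; $\psi\in\mathsf{N4CK}$ means $\psi$ is valid. The map $\overline{Tr}:\mathcal{L}_{\Box\!\!\rightarrow}\to\mathcal{L}_\Box$ is defined by $\overline{Tr}(p)=p$, $\overline{Tr}(\sim\psi)=\sim\overline{Tr}(\psi)$, $\overline{Tr}(\psi\ast\chi)=\overline{Tr}(\psi)\ast\overline{Tr}(\chi)$ for $\ast\in\{\wedge,\vee,\to\}$, and $\overline{Tr}(\psi\Box\!\!\rightarrow\chi)=\Box\overline{Tr}(\chi)$ (the antecedent is dropped). *)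

theory Defs
  imports Main
begin

datatype 'a fm_box =
    BAtom 'a
  | BConj "'a fm_box" "'a fm_box"
  | BDisj "'a fm_box" "'a fm_box"
  | BImp "'a fm_box" "'a fm_box"
  | BSNeg "'a fm_box"
  | Box "'a fm_box"

datatype 'a fm_cond =
    CAtom 'a
  | CConj "'a fm_cond" "'a fm_cond"
  | CDisj "'a fm_cond" "'a fm_cond"
  | CImp "'a fm_cond" "'a fm_cond"
  | CSNeg "'a fm_cond"
  | Would "'a fm_cond" "'a fm_cond"

fun Tr :: "'a fm_cond \<Rightarrow> 'a fm_box" where
  "Tr (CAtom p) = BAtom p"
| "Tr (CSNeg \<psi>) = BSNeg (Tr \<psi>)"
| "Tr (CConj \<psi> \<chi>) = BConj (Tr \<psi>) (Tr \<chi>)"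
| "Tr (CDisj \<psi> \<chi>) = BDisj (Tr \<psi>) (Tr \<chi>)"
| "Tr (CImp \<psi> \<chi>) = BImp (Tr \<psi>) (Tr \<chi>)"
| "Tr (Would \<psi> \<chi>) = Box (Tr \<chi>)"

definition preorder_on :: "'w set \<Rightarrow> ('w \<Rightarrow> 'w \<Rightarrow> bool) \<Rightarrow> bool" where
  "preorder_on W le \<longleftrightarrow>
     (\<forall>w\<in>W. le w w) \<and>
     (\<forall>u\<in>W. \<forall>v\<in>W. \<forall>w\<in>W. le u v \<longrightarrow> le v w \<longrightarrow> le u w)"

definition upclosed :: "'w set \<Rightarrow> ('w \<Rightarrow> 'w \<Rightarrow> bool) \<Rightarrow> 'w set \<Rightarrow> bool" where
  "upclosed W le X \<longleftrightarrow> X \<subseteq> W \<and> (\<forall>w\<in>X. \<forall>v\<in>W. le w v \<longrightarrow> v \<in> X)"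

definition rel_conds :: "'w set \<Rightarrow> ('w \<Rightarrow> 'w \<Rightarrow> bool) \<Rightarrow> ('w \<Rightarrow> 'w \<Rightarrow> bool) \<Rightarrow> bool" where
  "rel_conds W le R \<longleftrightarrow>
     (\<forall>w\<in>W. \<forall>w'\<in>W. \<forall>v\<in>W. le w w' \<longrightarrow> R w v \<longrightarrow> (\<exists>v'\<in>W. le v v' \<and> R w' v')) \<and>
     (\<forall>w\<in>W. \<forall>v\<in>W. \<forall>v'\<in>W. R w v \<longrightarrow> le v v' \<longrightarrow> (\<exists>w'\<in>W. le w w' \<and> R w' v'))"

definition fsk_model ::
  "'w set \<Rightarrow> ('w \<Rightarrow> 'w \<Rightarrow> bool) \<Rightarrow> ('w \<Rightarrow> 'w \<Rightarrow> bool) \<Rightarrow> ('a \<Rightarrow> 'w set) \<Rightarrow> ('a \<Rightarrow> 'w set) \<Rightarrow> bool" where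
  "fsk_model W le R Vp Vm \<longleftrightarrow>
     preorder_on W le \<and>
     (\<forall>w v. R w v \<longrightarrow> w \<in> W \<and> v \<in> W) \<and>
     rel_conds W le R \<and>
     (\<forall>p. upclosed W le (Vp p) \<and> upclosed W le (Vm p))"

definition n4ck_model ::
  "'w set \<Rightarrow> ('w \<Rightarrow> 'w \<Rightarrow> bool) \<Rightarrow> ('w set \<times> 'w set \<Rightarrow> 'w \<Rightarrow> 'w \<Rightarrow> bool) \<Rightarrow> ('a \<Rightarrow> 'w set) \<Rightarrow> ('a \<Rightarrow> 'w set) \<Rightarrow> bool" where
  "n4ck_model W le R Vp Vm \<longleftrightarrow>
     preorder_on W le \<and>
     (\<forall>XY w v. R XY w v \<longrightarrow> w \<in> W \<and> v \<in> W) \<and>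
     (\<forall>X Y. X \<subseteq> W \<longrightarrow> Y \<subseteq> W \<longrightarrow> rel_conds W le (R (X, Y))) \<and>
     (\<forall>p. upclosed W le (Vp p) \<and> upclosed W le (Vm p))"

text \<open>sem_box W le R Vp Vm True w \<phi>: w verifies \<phi>; with False: w falsifies \<phi>.\<close>
fun sem_box ::
  "'w set \<Rightarrow> ('w \<Rightarrow> 'w \<Rightarrow> bool) \<Rightarrow> ('w \<Rightarrow> 'w \<Rightarrow> bool) \<Rightarrow> ('a \<Rightarrow> 'w set) \<Rightarrow> ('a \<Rightarrow> 'w set)
   \<Rightarrow> bool \<Rightarrow> 'w \<Rightarrow> 'a fm_box \<Rightarrow> bool" where
  "sem_box W le R Vp Vm b w (BAtom p) = (if b then w \<in> Vp p else w \<in> Vm p)"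
| "sem_box W le R Vp Vm b w (BConj \<phi> \<psi>) =
     (if b then sem_box W le R Vp Vm True w \<phi> \<and> sem_box W le R Vp Vm True w \<psi>
      else sem_box W le R Vp Vm False w \<phi> \<or> sem_box W le R Vp Vm False w \<psi>)"
| "sem_box W le R Vp Vm b w (BDisj \<phi> \<psi>) =
     (if b then sem_box W le R Vp Vm True w \<phi> \<or> sem_box W le R Vp Vm True w \<psi>
      else sem_box W le R Vp Vm False w \<phi> \<and> sem_box W le R Vp Vm False w \<psi>)"
| "sem_box W le R Vp Vm b w (BImp \<phi> \<psi>) =
     (if b then (\<forall>v\<in>W. le w v \<longrightarrow> sem_box W le R Vp Vm True v \<phi> \<longrightarrow> sem_box W le R Vp Vm True v \<psi>)
      else sem_box W le R Vp Vm True w \<phi> \<and> sem_box W le R Vp Vm False w \<psi>)"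
| "sem_box W le R Vp Vm b w (BSNeg \<phi>) = sem_box W le R Vp Vm (\<not> b) w \<phi>"
| "sem_box W le R Vp Vm b w (Box \<phi>) =
     (if b then (\<forall>v\<in>W. le w v \<longrightarrow> (\<forall>u\<in>W. R v u \<longrightarrow> sem_box W le R Vp Vm True u \<phi>))
      else (\<exists>u\<in>W. R w u \<and> sem_box W le R Vp Vm False u \<phi>))"

fun sem_cond ::
  "'w set \<Rightarrow> ('w \<Rightarrow> 'w \<Rightarrow> bool) \<Rightarrow> ('w set \<times> 'w set \<Rightarrow> 'w \<Rightarrow> 'w \<Rightarrow> bool) \<Rightarrow> ('a \<Rightarrow> 'w set) \<Rightarrow> ('a \<Rightarrow> 'w set)
   \<Rightarrow> bool \<Rightarrow> 'w \<Rightarrow> 'a fm_cond \<Rightarrow> bool" where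
  "sem_cond W le R Vp Vm b w (CAtom p) = (if b then w \<in> Vp p else w \<in> Vm p)"
| "sem_cond W le R Vp Vm b w (CConj \<phi> \<psi>) =
     (if b then sem_cond W le R Vp Vm True w \<phi> \<and> sem_cond W le R Vp Vm True w \<psi>
      else sem_cond W le R Vp Vm False w \<phi> \<or> sem_cond W le R Vp Vm False w \<psi>)"
| "sem_cond W le R Vp Vm b w (CDisj \<phi> \<psi>) =
     (if b then sem_cond W le R Vp Vm True w \<phi> \<or> sem_cond W le R Vp Vm True w \<psi>
      else sem_cond W le R Vp Vm False w \<phi> \<and> sem_cond W le R Vp Vm False w \<psi>)"
| "sem_cond W le R Vp Vm b w (CImp \<phi> \<psi>) =
     (if b then (\<forall>v\<in>W. le w v \<longrightarrow> sem_cond W le R Vp Vm True v \<phi> \<longrightarrow> sem_cond W le R Vp Vm True v \<psi>)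
      else sem_cond W le R Vp Vm True w \<phi> \<and> sem_cond W le R Vp Vm False w \<psi>)"
| "sem_cond W le R Vp Vm b w (CSNeg \<phi>) = sem_cond W le R Vp Vm (\<not> b) w \<phi>"
| "sem_cond W le R Vp Vm b w (Would \<phi> \<psi>) =
     (let XY = ({x\<in>W. sem_cond W le R Vp Vm True x \<phi>}, {x\<in>W. sem_cond W le R Vp Vm False x \<phi>}) in
      if b then (\<forall>v\<in>W. le w v \<longrightarrow> (\<forall>u\<in>W. R XY v u \<longrightarrow> sem_cond W le R Vp Vm True u \<psi>))
      else (\<exists>u\<in>W. R XY w u \<and> sem_cond W le R Vp Vm False u \<psi>))"

definition FSKd_valid :: "'w itself \<Rightarrow> 'a fm_box \<Rightarrow> bool" where
  "FSKd_valid _ \<phi> \<longleftrightarrow>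
     (\<forall>(W::'w set) le R Vp Vm. fsk_model W le R Vp Vm \<longrightarrow>
        (\<forall>w\<in>W. sem_box W le R Vp Vm True w \<phi>))"

definition N4CK_valid :: "'w itself \<Rightarrow> 'a fm_cond \<Rightarrow> bool" where
  "N4CK_valid _ \<psi> \<longleftrightarrow>
     (\<forall>(W::'w set) le R Vp Vm. n4ck_model W le R Vp Vm \<longrightarrow>
        (\<forall>w\<in>W. sem_cond W le R Vp Vm True w \<psi>))"

end

theory Submission
  imports Defs
begin

(* An FSK^d model becomes an N4CK model by letting every antecedent select the same
   relation R. In that model a would-conditional with consequent chi is evaluated exactly
   like Box chi, so psi and Tr psi have the same verifiers and falsifiers; validity of psi
   therefore transfers to Tr psi. *)

lemma n4ck_model_antecedent_independent:
  assumes "fsk_model W le R Vp Vm"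
  shows "n4ck_model W le (\<lambda>_. R) Vp Vm"
  using assms unfolding fsk_model_def n4ck_model_def by simp

lemma sem_cond_antecedent_independent_eq_sem_box_Tr:
  "sem_cond W le (\<lambda>_. R) Vp Vm b w \<psi> = sem_box W le R Vp Vm b w (Tr \<psi>)"
  by (induction \<psi> arbitrary: b w) (simp_all add: Let_def)

theorem corollary2:
  fixes \<psi> :: "'a fm_cond"
  assumes "N4CK_valid TYPE('w) \<psi>"
  shows "FSKd_valid TYPE('w) (Tr \<psi>)"
  unfolding FSKd_valid_def
proof (intro allI impI ballI)
  fix W :: "'w set" and le R and Vp Vm :: "'a \<Rightarrow> 'w set" and w
  assume "fsk_model W le R Vp Vm" and "w \<in> W"
  then have "sem_cond W le (\<lambda>_. R) Vp Vm True w \<psi>"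
    using assms n4ck_model_antecedent_independent unfolding N4CK_valid_def by blast
  then show "sem_box W le R Vp Vm True w (Tr \<psi>)"
    by (simp add: sem_cond_antecedent_independent_eq_sem_box_Tr)
qed

end
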